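(* Let $\mathsf G$ be a finite group, $\mathsf M\leqslant \mathsf G$, $\mathsf T\leqslant N_{\mathsf G}(\mathsf M)$ an abelian subgroup and $\mathsf r\in\mathsf T$. Assume that (q) $\mathsf M$ is quasi-simple; (n) $\mathsf r\notin \operatorname{Cent}_{\mathsf G}(\mathsf M)$; and (w) the set $(\mathcal O_{\mathsf r}^{\mathsf G}\cap \mathsf T)\setminus\big((\mathcal O_{\mathsf r}^{\mathsf M}\cap\mathsf T)\cup \operatorname{Cent}_{\mathsf G}(\mathsf M)\big)$ is nonempty. Then the conjugacy class $\mathcal O_{\mathsf r}^{\mathsf G}$ is of type C.
   Context: For a subgroup $H\leqslant G$ and $g\in G$, $\mathcal O_g^H=\{hgh^{-1}:h\in H\}$ is the orbit of $g$ under conjugation by $H$. A finite group is quasi-simple if it is perfect and $H/Z(H)$ is simple (hence non-abelian). A conjugacy class $\mathcal O$ of a finite group $G$ is of type C if there are $H\leqslant G$ and $r,s\in H\cap\mathcal O$ such that $rs\neq sr$, $H=\langle \mathcal O_r^H,\mathcal O_s^H\rangle$, $\mathcal O_r^H\neq\mathcal O_s^H$, and either $\min\{|\mathcal O_r^H|,|\mathcal O_s^H|\}>2$ or $\max\{|\mathcal O_r^H|,|\mathcal O_s^H|\}>4$. *)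

theory Defs
  imports "HOL-Algebra.Algebra"
begin

definition conj_orbit :: "('a, 'b) monoid_scheme \<Rightarrow> 'a set \<Rightarrow> 'a \<Rightarrow> 'a set" where
  "conj_orbit G H g = {h \<otimes>\<^bsub>G\<^esub> g \<otimes>\<^bsub>G\<^esub> inv\<^bsub>G\<^esub> h | h. h \<in> H}"

definition centralizer :: "('a, 'b) monoid_scheme \<Rightarrow> 'a set \<Rightarrow> 'a set" where
  "centralizer G S = {g \<in> carrier G. \<forall>s \<in> S. g \<otimes>\<^bsub>G\<^esub> s = s \<otimes>\<^bsub>G\<^esub> g}"

definition subgroup_center :: "('a, 'b) monoid_scheme \<Rightarrow> 'a set \<Rightarrow> 'a set" where
  "subgroup_center G H = {z \<in> H. \<forall>h \<in> H. z \<otimes>\<^bsub>G\<^esub> h = h \<otimes>\<^bsub>G\<^esub> z}"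

definition quasi_simple :: "('a, 'b) monoid_scheme \<Rightarrow> 'a set \<Rightarrow> bool" where
  "quasi_simple G H \<longleftrightarrow> subgroup H G \<and> derived G H = H \<and>
     simple_group ((G\<lparr>carrier := H\<rparr>) Mod (subgroup_center G H))"

definition type_C :: "('a, 'b) monoid_scheme \<Rightarrow> 'a set \<Rightarrow> bool" where
  "type_C G Cl \<longleftrightarrow> (\<exists>H r s. subgroup H G \<and> r \<in> H \<inter> Cl \<and> s \<in> H \<inter> Cl \<and>
      r \<otimes>\<^bsub>G\<^esub> s \<noteq> s \<otimes>\<^bsub>G\<^esub> r \<and>
      H = generate G (conj_orbit G H r \<union> conj_orbit G H s) \<and>
      conj_orbit G H r \<noteq> conj_orbit G H s \<and>
      (min (card (conj_orbit G H r)) (card (conj_orbit G H s)) > 2 \<or>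
       max (card (conj_orbit G H r)) (card (conj_orbit G H s)) > 4))"

end

theory Submission
  imports Defs
begin

text \<open>For \<open>x\<close> normalizing but not centralizing the quasi-simple group \<open>M\<close>, the subgroup
  generated by the quotients \<open>a b\<^sup>-\<^sup>1\<close> of the \<open>M\<close>-orbit of \<open>x\<close> is normal in \<open>M\<close> and not
  central (it contains the commutators \<open>[m, x]\<close>), hence it is all of \<open>M\<close>. So the \<open>M\<close>-orbit of
  \<open>x\<close> generates a subgroup containing \<open>M\<close>, and it has more than two elements, since otherwise
  those quotients would commute and \<open>M\<close> would be abelian.

  Now pick \<open>s \<in> T\<close> conjugate to \<open>r\<close> in \<open>G\<close> but not in \<open>M\<close>, and let \<open>H\<close> be generated by
  the \<open>M\<close>-orbits of \<open>r\<close> and \<open>s\<close>. Then \<open>M \<le> H \<le> M T\<close>, and as \<open>T\<close> is abelian the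
  \<open>H\<close>-orbits of \<open>r\<close> and \<open>s\<close> are their \<open>M\<close>-orbits. These two orbits generate subgroups
  containing the non-abelian \<open>M\<close>, so they contain non-commuting elements \<open>r'\<close>, \<open>s'\<close>, which
  witness that the class of \<open>r\<close> is of type C.\<close>

context group
begin

section \<open>Conjugation orbits\<close>

lemma inv_mult_cancel_left [simp]:
  "x \<in> carrier G \<Longrightarrow> y \<in> carrier G \<Longrightarrow> inv x \<otimes> (x \<otimes> y) = y"
  by (simp add: m_assoc[symmetric])

lemma mult_inv_cancel_left [simp]:
  "x \<in> carrier G \<Longrightarrow> y \<in> carrier G \<Longrightarrow> x \<otimes> (inv x \<otimes> y) = y"
  by (simp add: m_assoc[symmetric])

lemma conj_orbit_subset_carrier:
  "H \<subseteq> carrier G \<Longrightarrow> x \<in> carrier G \<Longrightarrow> conj_orbit G H x \<subseteq> carrier G"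
  unfolding conj_orbit_def by blast

lemma conj_orbit_mono: "H \<subseteq> K \<Longrightarrow> conj_orbit G H x \<subseteq> conj_orbit G K x"
  unfolding conj_orbit_def by blast

lemma conj_orbit_self:
  "subgroup H G \<Longrightarrow> x \<in> carrier G \<Longrightarrow> x \<in> conj_orbit G H x"
  unfolding conj_orbit_def using subgroup.one_closed by force

lemma conj_orbit_trans:
  assumes H: "subgroup H G" and x: "x \<in> carrier G"
    and y: "y \<in> conj_orbit G H x" and z: "z \<in> conj_orbit G H y"
  shows "z \<in> conj_orbit G H x"
proof -
  obtain h k where h: "h \<in> H" "y = h \<otimes> x \<otimes> inv h" and k: "k \<in> H" "z = k \<otimes> y \<otimes> inv k"
    using y z unfolding conj_orbit_def by blast
  have "z = (k \<otimes> h) \<otimes> x \<otimes> inv (k \<otimes> h)"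
    using h k x subgroup.mem_carrier[OF H] by (simp add: m_assoc inv_mult_group)
  moreover have "k \<otimes> h \<in> H" using h k H by (simp add: subgroup.m_closed)
  ultimately show ?thesis unfolding conj_orbit_def by blast
qed

lemma conj_orbit_sym:
  assumes H: "subgroup H G" and x: "x \<in> carrier G" and y: "y \<in> conj_orbit G H x"
  shows "x \<in> conj_orbit G H y"
proof -
  obtain h where h: "h \<in> H" "y = h \<otimes> x \<otimes> inv h"
    using y unfolding conj_orbit_def by blast
  have "x = inv h \<otimes> y \<otimes> inv (inv h)"
    using h x subgroup.mem_carrier[OF H] by (simp add: m_assoc inv_solve_left)
  moreover have "inv h \<in> H" using h H by (simp add: subgroup.m_inv_closed)
  ultimately show ?thesis unfolding conj_orbit_def by blast
qed

lemma conj_orbit_eq: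
  assumes "subgroup H G" "x \<in> carrier G" "y \<in> conj_orbit G H x"
  shows "conj_orbit G H y = conj_orbit G H x"
proof -
  have "y \<in> carrier G"
    using assms conj_orbit_subset_carrier subgroup.subset by blast
  then show ?thesis
    using assms conj_orbit_trans conj_orbit_sym by blast
qed

lemma inv_commute:
  assumes "a \<in> carrier G" "b \<in> carrier G" "a \<otimes> b = b \<otimes> a"
  shows "inv a \<otimes> b = b \<otimes> inv a"
proof -
  have "inv a \<otimes> b = inv a \<otimes> (b \<otimes> a) \<otimes> inv a"
    using assms(1,2) by (simp add: m_assoc)
  also have "\<dots> = inv a \<otimes> (a \<otimes> b) \<otimes> inv a" by (simp only: assms(3))
  also have "\<dots> = b \<otimes> inv a"
    using assms(1,2) by (simp add: m_assoc[symmetric])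
  finally show ?thesis .
qed

lemma centralizer_subgroup:
  assumes "S \<subseteq> carrier G" shows "subgroup (centralizer G S) G"
proof (rule subgroupI)
  show "centralizer G S \<subseteq> carrier G" "centralizer G S \<noteq> {}"
    using assms unfolding centralizer_def by (auto intro!: exI[of _ \<one>])
next
  fix a b assume a: "a \<in> centralizer G S" and b: "b \<in> centralizer G S"
  show "inv a \<in> centralizer G S"
    using a assms unfolding centralizer_def by (auto simp: subsetD inv_commute)
  show "a \<otimes> b \<in> centralizer G S"
    using a b assms unfolding centralizer_def by (auto simp: m_assoc) (metis m_assoc subsetD)
qed

lemma generate_commute:
  assumes A: "A \<subseteq> carrier G" and B: "B \<subseteq> carrier G"
    and AB: "\<forall>a\<in>A. \<forall>b\<in>B. a \<otimes> b = b \<otimes> a"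
    and x: "x \<in> generate G A" and y: "y \<in> generate G B"
  shows "x \<otimes> y = y \<otimes> x"
proof -
  have "A \<subseteq> centralizer G B" using A AB unfolding centralizer_def by auto
  then have "generate G A \<subseteq> centralizer G B"
    using generate_subgroup_incl centralizer_subgroup B by blast
  then have "B \<subseteq> centralizer G (generate G A)"
    using B unfolding centralizer_def by auto
  then have "generate G B \<subseteq> centralizer G (generate G A)"
    using generate_subgroup_incl centralizer_subgroup generate_incl A by blast
  then show ?thesis using x y unfolding centralizer_def by auto
qed

lemma normalizer_subset_carrier: "normalizer G M \<subseteq> carrier G"
  unfolding normalizer_def stabilizer_def by auto

lemma normalizer_conj_closed:
  assumes "M \<subseteq> carrier G" "x \<in> normalizer G M" "m \<in> M"
  shows "x \<otimes> m \<otimes> inv x \<in> M"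
proof -
  have "x <# M #> inv x = M"
    using assms(1,2) unfolding normalizer_def stabilizer_def by auto
  moreover have "x \<otimes> m \<otimes> inv x \<in> x <# M #> inv x"
    using assms(3) unfolding l_coset_def r_coset_def by auto
  ultimately show ?thesis by simp
qed

lemma set_mult_subgroup_if_normalizer:
  assumes M: "subgroup M G" and T: "subgroup T G" and TN: "T \<subseteq> normalizer G M"
  shows "subgroup (M <#> T) G"
proof -
  let ?N = "G\<lparr>carrier := normalizer G M\<rparr>"
  have N: "subgroup (normalizer G M) G"
    using M by (simp add: normalizer_imp_subgroup subgroup.subset)
  interpret N: group ?N by (rule subgroup_imp_group[OF N])
  have "subgroup (M <#>\<^bsub>?N\<^esub> T) ?N"
    using N.mult_norm_subgroup subgroup_in_normalizer[OF M] subgroup_incl[OF T N TN] by blast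
  moreover have "M <#>\<^bsub>?N\<^esub> T = M <#> T" by (simp add: set_mult_def)
  ultimately show ?thesis using incl_subgroup[OF N] by simp
qed

lemma conj_orbit_subset_r_coset:
  assumes M: "subgroup M G" and y: "y \<in> normalizer G M"
  shows "conj_orbit G M y \<subseteq> M #> y"
proof
  fix z assume "z \<in> conj_orbit G M y"
  then obtain m where m: "m \<in> M" "z = m \<otimes> y \<otimes> inv m" unfolding conj_orbit_def by blast
  have yc: "y \<in> carrier G" using y normalizer_subset_carrier by blast
  have "z = (m \<otimes> (y \<otimes> inv m \<otimes> inv y)) \<otimes> y"
    using m yc subgroup.mem_carrier[OF M] by (simp add: m_assoc)
  moreover have "m \<otimes> (y \<otimes> inv m \<otimes> inv y) \<in> M"
    using m M normalizer_conj_closed[OF subgroup.subset[OF M] y]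
    by (simp add: subgroup.m_closed subgroup.m_inv_closed)
  ultimately show "z \<in> M #> y" unfolding r_coset_def by blast
qed

lemma conj_orbit_eq_if_subset_set_mult:
  assumes M: "subgroup M G" and T: "T \<subseteq> carrier G" and y: "y \<in> carrier G"
    and Ty: "\<forall>t\<in>T. t \<otimes> y = y \<otimes> t" and MH: "M \<subseteq> H" and HMT: "H \<subseteq> M <#> T"
  shows "conj_orbit G H y = conj_orbit G M y"
proof
  show "conj_orbit G M y \<subseteq> conj_orbit G H y" using MH by (rule conj_orbit_mono)
  show "conj_orbit G H y \<subseteq> conj_orbit G M y"
  proof
    fix z assume "z \<in> conj_orbit G H y"
    then obtain h where "h \<in> H" "z = h \<otimes> y \<otimes> inv h" unfolding conj_orbit_def by blast
    then obtain m t where m: "m \<in> M" and t: "t \<in> T" and z: "z = (m \<otimes> t) \<otimes> y \<otimes> inv (m \<otimes> t)"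
      using HMT unfolding set_mult_def by blast
    have mc: "m \<in> carrier G" and tc: "t \<in> carrier G"
      using m t T subgroup.mem_carrier[OF M] by auto
    have "z = m \<otimes> (t \<otimes> y) \<otimes> inv t \<otimes> inv m"
      using z mc tc y by (simp add: m_assoc inv_mult_group)
    also have "\<dots> = m \<otimes> y \<otimes> inv m"
      using Ty t mc tc y by (simp add: m_assoc)
    finally show "z \<in> conj_orbit G M y" using m unfolding conj_orbit_def by blast
  qed
qed

lemma conj_orbit_generate_conj_orbits:
  assumes M: "subgroup M G" and T: "subgroup T G" "T \<subseteq> normalizer G M"
    and T_comm: "\<forall>x\<in>T. \<forall>y\<in>T. x \<otimes> y = y \<otimes> x" and S: "S \<subseteq> T"
    and MH: "M \<subseteq> generate G (\<Union>x\<in>S. conj_orbit G M x)" and y: "y \<in> T"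
  shows "conj_orbit G (generate G (\<Union>x\<in>S. conj_orbit G M x)) y = conj_orbit G M y"
proof (rule conj_orbit_eq_if_subset_set_mult[OF M subgroup.subset[OF T(1)] _ _ MH])
  show "y \<in> carrier G" using subgroup.mem_carrier[OF T(1) y] .
  show "\<forall>t\<in>T. t \<otimes> y = y \<otimes> t" using T_comm y by blast
  have "conj_orbit G M x \<subseteq> M <#> T" if "x \<in> S" for x
    using conj_orbit_subset_r_coset[OF M] S T(2) that unfolding r_coset_def set_mult_def by blast
  then show "generate G (\<Union>x\<in>S. conj_orbit G M x) \<subseteq> M <#> T"
    by (intro generate_subgroup_incl[OF _ set_mult_subgroup_if_normalizer[OF M T]]) blast
qed

lemma type_C_of_conj_orbits:
  assumes H: "subgroup H G" and x: "x \<in> carrier G" and y: "y \<in> carrier G"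
    and a: "a \<in> conj_orbit G H x" and b: "b \<in> conj_orbit G H y" and ab: "a \<otimes> b \<noteq> b \<otimes> a"
    and Cl: "conj_orbit G H x \<subseteq> Cl" "conj_orbit G H y \<subseteq> Cl"
    and gen: "H = generate G (conj_orbit G H x \<union> conj_orbit G H y)"
    and distinct: "conj_orbit G H x \<noteq> conj_orbit G H y"
    and card: "2 < card (conj_orbit G H x)" "2 < card (conj_orbit G H y)"
  shows "type_C G Cl"
proof -
  have "conj_orbit G H a = conj_orbit G H x" "conj_orbit G H b = conj_orbit G H y"
    using conj_orbit_eq[OF H x a] conj_orbit_eq[OF H y b] .
  moreover have "a \<in> H" "b \<in> H"
    using a b gen generate.incl[of _ "conj_orbit G H x \<union> conj_orbit G H y" G] by auto
  ultimately show ?thesis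
    unfolding type_C_def using H Cl a b ab gen distinct card
    by (intro exI[of _ H] exI[of _ a] exI[of _ b] conjI) auto
qed

section \<open>Quasi-simple groups\<close>

lemma subgroup_center_eq: "M \<subseteq> carrier G \<Longrightarrow> subgroup_center G M = M \<inter> centralizer G M"
  unfolding subgroup_center_def centralizer_def by auto

lemma subgroup_center_subgroup: "subgroup M G \<Longrightarrow> subgroup (subgroup_center G M) G"
  by (simp add: subgroup_center_eq subgroup.subset subgroups_Inter_pair centralizer_subgroup)

lemma subgroup_center_normal:
  assumes M: "subgroup M G" shows "subgroup_center G M \<lhd> G\<lparr>carrier := M\<rparr>"
proof -
  interpret Mg: group "G\<lparr>carrier := M\<rparr>" by (rule subgroup_imp_group[OF M])
  have "subgroup (subgroup_center G M) (G\<lparr>carrier := M\<rparr>)"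
    using subgroup_incl subgroup_center_subgroup[OF M] M by (auto simp: subgroup_center_def)
  moreover have "y \<otimes> z \<otimes> inv y \<in> subgroup_center G M" if "y \<in> M" "z \<in> subgroup_center G M" for y z
  proof -
    have "y \<otimes> z = z \<otimes> y" "y \<in> carrier G" "z \<in> carrier G"
      using that subgroup.mem_carrier[OF M] by (auto simp: subgroup_center_def)
    then show ?thesis using that by (simp add: m_assoc)
  qed
  ultimately show ?thesis unfolding Mg.normal_inv_iff by (simp add: m_inv_consistent[OF M])
qed

lemma commutator_mult_subgroup_center:
  assumes M: "subgroup M G" and u: "u \<in> subgroup_center G M" and v: "v \<in> subgroup_center G M"
    and a: "a \<in> M" and b: "b \<in> M"
  shows "(u \<otimes> a) \<otimes> (v \<otimes> b) \<otimes> inv (u \<otimes> a) \<otimes> inv (v \<otimes> b) = a \<otimes> b \<otimes> inv a \<otimes> inv b"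
proof -
  define c where "c = a \<otimes> b \<otimes> inv a \<otimes> inv b"
  have central: "z \<otimes> m = m \<otimes> z" if "z \<in> subgroup_center G M" "m \<in> M" for z m
    using that unfolding subgroup_center_def by blast
  have "u \<in> M" "v \<in> M" "c \<in> M"
    using u v a b M unfolding c_def subgroup_center_def
    by (auto simp: subgroup.m_closed subgroup.m_inv_closed)
  then have carr: "u \<in> carrier G" "v \<in> carrier G" "c \<in> carrier G"
    and uv: "u \<otimes> v = v \<otimes> u" and uc: "u \<otimes> c = c \<otimes> u" and vc: "v \<otimes> c = c \<otimes> v"
    using central u v subgroup.mem_carrier[OF M] by auto
  have ab: "a \<in> carrier G" "b \<in> carrier G" using a b subgroup.mem_carrier[OF M] by auto
  have "(u \<otimes> a) \<otimes> (v \<otimes> b) \<otimes> inv (u \<otimes> a) \<otimes> inv (v \<otimes> b)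
      = u \<otimes> (a \<otimes> v) \<otimes> b \<otimes> inv a \<otimes> inv (b \<otimes> u) \<otimes> inv v"
    using carr ab by (simp add: m_assoc inv_mult_group)
  also have "\<dots> = u \<otimes> (v \<otimes> a) \<otimes> b \<otimes> inv a \<otimes> inv (u \<otimes> b) \<otimes> inv v"
    by (simp only: central[OF v a] central[OF u b])
  also have "\<dots> = (u \<otimes> v) \<otimes> c \<otimes> inv (v \<otimes> u)"
    unfolding c_def using carr ab by (simp add: m_assoc inv_mult_group)
  also have "\<dots> = v \<otimes> (u \<otimes> c) \<otimes> inv u \<otimes> inv v"
    using carr by (simp add: uv m_assoc inv_mult_group)
  also have "\<dots> = c"
    using carr by (simp add: uc vc m_assoc flip: m_assoc[of v c])
  finally show ?thesis unfolding c_def .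
qed

lemma quasi_simple_subgroup: "quasi_simple G M \<Longrightarrow> subgroup M G"
  unfolding quasi_simple_def by simp

lemma quasi_simple_subset_if_derived_set_subset:
  assumes "quasi_simple G M" "subgroup K G" "derived_set G M \<subseteq> K"
  shows "M \<subseteq> K"
  using generate_subgroup_incl[OF assms(3,2)] assms(1)
  unfolding quasi_simple_def derived_def by simp

lemma quasi_simple_not_commutative:
  assumes qs: "quasi_simple G M"
  shows "\<not> (\<forall>a\<in>M. \<forall>b\<in>M. a \<otimes> b = b \<otimes> a)"
proof
  assume comm: "\<forall>a\<in>M. \<forall>b\<in>M. a \<otimes> b = b \<otimes> a"
  have M: "subgroup M G" and simple: "simple_group ((G\<lparr>carrier := M\<rparr>) Mod (subgroup_center G M))"
    using qs unfolding quasi_simple_def by auto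
  have "derived_set G M \<subseteq> {\<one>}"
  proof clarify
    fix a b assume "a \<in> M" "b \<in> M"
    then have "a \<otimes> b \<otimes> inv a \<otimes> inv b = b \<otimes> a \<otimes> inv a \<otimes> inv b"
      using comm by simp
    then show "a \<otimes> b \<otimes> inv a \<otimes> inv b = \<one>"
      using \<open>a \<in> M\<close> \<open>b \<in> M\<close> subgroup.mem_carrier[OF M] by (simp add: m_assoc)
  qed
  then have "M = {\<one>}"
    using quasi_simple_subset_if_derived_set_subset[OF qs triv_subgroup] subgroup.one_closed[OF M]
    by auto
  then have "order ((G\<lparr>carrier := M\<rparr>) Mod (subgroup_center G M)) = 1"
    unfolding order_def carrier_FactGroup by simp
  then show False using simple_group.order_gt_one[OF simple] by simp
qed

lemma quasi_simple_eq_if_subset_center_mult: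
  assumes qs: "quasi_simple G M" and N: "subgroup N G" "N \<subseteq> M"
    and MZN: "M \<subseteq> subgroup_center G M <#> N"
  shows "N = M"
proof -
  have M: "subgroup M G" using qs by (rule quasi_simple_subgroup)
  have "derived_set G M \<subseteq> N"
  proof clarify
    fix a b assume "a \<in> M" "b \<in> M"
    then obtain u d v e where "u \<in> subgroup_center G M" "d \<in> N" "a = u \<otimes> d"
      and "v \<in> subgroup_center G M" "e \<in> N" "b = v \<otimes> e"
      using MZN unfolding set_mult_def by blast
    then have "a \<otimes> b \<otimes> inv a \<otimes> inv b = d \<otimes> e \<otimes> inv d \<otimes> inv e"
      using commutator_mult_subgroup_center[OF M] N(2) by blast
    then show "a \<otimes> b \<otimes> inv a \<otimes> inv b \<in> N"
      using \<open>d \<in> N\<close> \<open>e \<in> N\<close> N(1) by (simp add: subgroup.m_closed subgroup.m_inv_closed)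
  qed
  then show ?thesis using quasi_simple_subset_if_derived_set_subset[OF qs N(1)] N(2) by blast
qed

text \<open>The image of \<open>N\<close> in the simple quotient \<open>M / Z(M)\<close> is trivial or everything.\<close>

lemma quasi_simple_normal_subgroup_cases:
  assumes qs: "quasi_simple G M" and N: "N \<lhd> G\<lparr>carrier := M\<rparr>"
  shows "N = M \<or> N \<subseteq> subgroup_center G M"
proof -
  define Mg where "Mg = G\<lparr>carrier := M\<rparr>"
  define Z where "Z = subgroup_center G M"
  have M: "subgroup M G" and simple: "simple_group (Mg Mod Z)"
    using qs unfolding quasi_simple_def Mg_def Z_def by auto
  interpret Mg: group Mg unfolding Mg_def by (rule subgroup_imp_group[OF M])
  have carrier_Mg: "carrier Mg = M" and coset_Mg: "\<And>a. Z #>\<^bsub>Mg\<^esub> a = Z #> a"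
    unfolding Mg_def r_coset_def by simp_all
  have "Z \<lhd> Mg" unfolding Mg_def Z_def using M by (rule subgroup_center_normal)
  then interpret Z: normal Z Mg .
  note Z_Mg = Z.subgroup_axioms
  have hom: "group_hom Mg (Mg Mod Z) (\<lambda>a. Z #>\<^bsub>Mg\<^esub> a)"
    by (intro group_hom.intro group_hom_axioms.intro Mg.is_group Z.factorgroup_is_group
        Z.r_coset_hom_Mod)
  have "(\<lambda>a. Z #>\<^bsub>Mg\<^esub> a) ` N \<lhd> Mg Mod Z"
    using normal.surj_hom_normal_subgroup[OF N[folded Mg_def] hom] by (simp add: carrier_FactGroup)
  then consider "(\<lambda>a. Z #>\<^bsub>Mg\<^esub> a) ` N = {Z}" | "(\<lambda>a. Z #>\<^bsub>Mg\<^esub> a) ` N = carrier (Mg Mod Z)"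
    using simple_group.no_real_normal_subgroup[OF simple] by auto
  then show ?thesis
  proof cases
    case 1
    have "n \<in> Z" if "n \<in> N" for n
    proof (rule Mg.coset_join1[OF _ _ Z_Mg])
      show "Z #>\<^bsub>Mg\<^esub> n = Z" using 1 that by blast
      show "n \<in> carrier Mg"
        using that subgroup.mem_carrier[OF normal_imp_subgroup[OF N[folded Mg_def]]] by blast
    qed
    then show ?thesis unfolding Z_def by blast
  next
    case 2
    have "m \<in> Z <#> N" if "m \<in> M" for m
    proof -
      have "Z #>\<^bsub>Mg\<^esub> m \<in> (\<lambda>a. Z #>\<^bsub>Mg\<^esub> a) ` N"
        using 2 that carrier_Mg by (simp add: carrier_FactGroup)
      then obtain d where "d \<in> N" "Z #> m = Z #> d" unfolding coset_Mg by blast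
      moreover have "m \<in> Z #> m" using Mg.rcos_self[OF _ Z_Mg] that carrier_Mg coset_Mg by simp
      ultimately show ?thesis unfolding r_coset_def set_mult_def by auto
    qed
    moreover have "subgroup N G" "N \<subseteq> M"
      using normal_imp_subgroup[OF N] incl_subgroup[OF M] subgroup.subset by fastforce+
    ultimately show ?thesis using quasi_simple_eq_if_subset_center_mult[OF qs] unfolding Z_def by blast
  qed
qed

lemma quasi_simple_centralizer_if_commutators_central:
  assumes qs: "quasi_simple G M" and x: "x \<in> carrier G"
    and central: "\<forall>m\<in>M. m \<otimes> x \<otimes> inv m \<otimes> inv x \<in> subgroup_center G M"
  shows "x \<in> centralizer G M"
proof -
  have M: "subgroup M G" using qs by (rule quasi_simple_subgroup)
  note Z = subgroup_center_subgroup[OF M]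
  have conj: "x \<otimes> a \<otimes> inv x = inv (a \<otimes> x \<otimes> inv a \<otimes> inv x) \<otimes> a" if "a \<in> M" for a
    using that x subgroup.mem_carrier[OF M] by (simp add: m_assoc inv_mult_group)
  have "derived_set G M \<subseteq> centralizer G {x}"
  proof clarify
    fix a b assume ab: "a \<in> M" "b \<in> M"
    define c where "c = a \<otimes> b \<otimes> inv a \<otimes> inv b"
    have ab_carr: "a \<in> carrier G" "b \<in> carrier G" and c: "c \<in> carrier G"
      using ab subgroup.mem_carrier[OF M] unfolding c_def by auto
    have "x \<otimes> c \<otimes> inv x
        = (x \<otimes> a \<otimes> inv x) \<otimes> (x \<otimes> b \<otimes> inv x) \<otimes> inv (x \<otimes> a \<otimes> inv x) \<otimes> inv (x \<otimes> b \<otimes> inv x)"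
      unfolding c_def using ab_carr x by (simp add: m_assoc inv_mult_group)
    also have "\<dots> = c"
      unfolding conj[OF ab(1)] conj[OF ab(2)] c_def
      using ab central by (intro commutator_mult_subgroup_center[OF M] subgroup.m_inv_closed[OF Z]) auto
    finally have "c \<otimes> x = x \<otimes> c"
      using c x by (metis inv_solve_right m_closed)
    then show "a \<otimes> b \<otimes> inv a \<otimes> inv b \<in> centralizer G {x}"
      using c unfolding c_def centralizer_def by simp
  qed
  then have "M \<subseteq> centralizer G {x}"
    using quasi_simple_subset_if_derived_set_subset[OF qs centralizer_subgroup] x by blast
  then show ?thesis using x unfolding centralizer_def by auto
qed

lemma mem_set_mult_set_inv: "z \<in> A <#> set_inv B \<longleftrightarrow> (\<exists>a\<in>A. \<exists>b\<in>B. z = a \<otimes> inv b)"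
  unfolding set_mult_def SET_INV_def by blast

lemma conj_orbit_quotients_subset:
  assumes M: "subgroup M G" and xN: "x \<in> normalizer G M"
  shows "conj_orbit G M x <#> set_inv (conj_orbit G M x) \<subseteq> M"
proof
  fix q assume "q \<in> conj_orbit G M x <#> set_inv (conj_orbit G M x)"
  then obtain a b where "a \<in> conj_orbit G M x" "b \<in> conj_orbit G M x" "q = a \<otimes> inv b"
    unfolding mem_set_mult_set_inv by blast
  then obtain m n where mn: "m \<in> M" "n \<in> M" "q = (m \<otimes> x \<otimes> inv m) \<otimes> inv (n \<otimes> x \<otimes> inv n)"
    unfolding conj_orbit_def by blast
  have "x \<in> carrier G" using xN normalizer_subset_carrier by blast
  then have "q = m \<otimes> (x \<otimes> (inv m \<otimes> n) \<otimes> inv x) \<otimes> inv n"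
    using mn subgroup.mem_carrier[OF M] by (simp add: m_assoc inv_mult_group)
  then show "q \<in> M"
    using mn M normalizer_conj_closed[OF subgroup.subset[OF M] xN]
    by (simp add: subgroup.m_closed subgroup.m_inv_closed)
qed

text \<open>The quotients of the orbit play the role of the commutators \<open>[m, x]\<close>, but unlike these
  they form a set invariant under conjugation by \<open>M\<close>.\<close>

lemma conj_orbit_quotients_normal:
  assumes M: "subgroup M G" and xN: "x \<in> normalizer G M"
  shows "generate G (conj_orbit G M x <#> set_inv (conj_orbit G M x)) \<lhd> G\<lparr>carrier := M\<rparr>"
proof -
  let ?O = "conj_orbit G M x"
  let ?Q = "?O <#> set_inv ?O"
  have x: "x \<in> carrier G" using xN normalizer_subset_carrier by blast
  have Q_conj: "m \<otimes> q \<otimes> inv m \<in> ?Q" if m: "m \<in> M" and "q \<in> ?Q" for m q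
  proof -
    obtain a b where ab: "a \<in> ?O" "b \<in> ?O" "q = a \<otimes> inv b"
      using \<open>q \<in> ?Q\<close> unfolding mem_set_mult_set_inv by blast
    have "a \<in> carrier G" "b \<in> carrier G"
      using ab conj_orbit_subset_carrier[OF subgroup.subset[OF M] x] by auto
    then have "m \<otimes> q \<otimes> inv m = (m \<otimes> a \<otimes> inv m) \<otimes> inv (m \<otimes> b \<otimes> inv m)"
      using ab(3) subgroup.mem_carrier[OF M m] by (simp add: m_assoc inv_mult_group)
    moreover have "m \<otimes> y \<otimes> inv m \<in> ?O" if "y \<in> ?O" for y
    proof (rule conj_orbit_trans[OF M x that])
      show "m \<otimes> y \<otimes> inv m \<in> conj_orbit G M y" using m unfolding conj_orbit_def by blast
    qed
    ultimately show ?thesis unfolding mem_set_mult_set_inv using ab by blast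
  qed
  let ?Mg = "G\<lparr>carrier := M\<rparr>"
  interpret Mg: group ?Mg by (rule subgroup_imp_group[OF M])
  have Q_M: "?Q \<subseteq> M" by (rule conj_orbit_quotients_subset[OF M xN])
  have "generate ?Mg ?Q \<lhd> ?Mg"
  proof (rule Mg.normal_generateI)
    show "?Q \<subseteq> carrier ?Mg" using Q_M by simp
    fix q m assume "q \<in> ?Q" "m \<in> carrier ?Mg"
    then show "m \<otimes>\<^bsub>?Mg\<^esub> q \<otimes>\<^bsub>?Mg\<^esub> inv\<^bsub>?Mg\<^esub> m \<in> ?Q"
      using Q_conj by (simp add: m_inv_consistent[OF M])
  qed
  then show ?thesis using generate_consistent[OF Q_M M] by simp
qed

lemma quasi_simple_generate_conj_orbit_quotients:
  assumes qs: "quasi_simple G M" and xN: "x \<in> normalizer G M" and xC: "x \<notin> centralizer G M"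
  shows "generate G (conj_orbit G M x <#> set_inv (conj_orbit G M x)) = M"
proof -
  let ?O = "conj_orbit G M x"
  have M: "subgroup M G" using qs by (rule quasi_simple_subgroup)
  have x: "x \<in> carrier G" using xN normalizer_subset_carrier by blast
  consider "generate G (?O <#> set_inv ?O) = M" | "generate G (?O <#> set_inv ?O) \<subseteq> subgroup_center G M"
    using quasi_simple_normal_subgroup_cases[OF qs conj_orbit_quotients_normal[OF M xN]] by blast
  then show ?thesis
  proof cases
    case 2
    have "m \<otimes> x \<otimes> inv m \<otimes> inv x \<in> subgroup_center G M" if "m \<in> M" for m
    proof -
      have "m \<otimes> x \<otimes> inv m \<in> ?O" using that unfolding conj_orbit_def by blast
      moreover have "x \<in> ?O" by (rule conj_orbit_self[OF M x])
      ultimately have "m \<otimes> x \<otimes> inv m \<otimes> inv x \<in> ?O <#> set_inv ?O"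
        unfolding mem_set_mult_set_inv by blast
      then show ?thesis by (rule subsetD[OF 2 generate.incl])
    qed
    then have "x \<in> centralizer G M"
      using quasi_simple_centralizer_if_commutators_central[OF qs x] by blast
    with xC show ?thesis by simp
  qed
qed

lemma quasi_simple_subset_generate_conj_orbit:
  assumes qs: "quasi_simple G M" and xN: "x \<in> normalizer G M" and xC: "x \<notin> centralizer G M"
  shows "M \<subseteq> generate G (conj_orbit G M x)"
proof -
  let ?O = "conj_orbit G M x"
  have O: "?O \<subseteq> carrier G"
    using conj_orbit_subset_carrier subgroup.subset[OF quasi_simple_subgroup[OF qs]]
      normalizer_subset_carrier xN by blast
  have "?O <#> set_inv ?O \<subseteq> generate G ?O"
  proof
    fix q assume "q \<in> ?O <#> set_inv ?O"
    then obtain a b where "a \<in> ?O" "b \<in> ?O" "q = a \<otimes> inv b" unfolding mem_set_mult_set_inv by blast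
    then show "q \<in> generate G ?O" by (auto intro: generate.eng generate.incl generate.inv)
  qed
  then show ?thesis
    using quasi_simple_generate_conj_orbit_quotients[OF assms]
      generate_subgroup_incl[OF _ generate_is_subgroup[OF O]] by blast
qed

lemma set_mult_set_inv_commute_if_subset_doubleton:
  assumes x: "x \<in> carrier G" and y: "y \<in> carrier G" and A: "A \<subseteq> {x, y}"
  shows "\<forall>p\<in>A <#> set_inv A. \<forall>q\<in>A <#> set_inv A. p \<otimes> q = q \<otimes> p"
proof -
  have Q: "p \<in> {\<one>, x \<otimes> inv y, inv (x \<otimes> inv y)}" if p: "p \<in> A <#> set_inv A" for p
  proof -
    obtain a b where "a \<in> A" "b \<in> A" "p = a \<otimes> inv b"
      using p unfolding mem_set_mult_set_inv by blast
    moreover have "a \<in> {x, y}" "b \<in> {x, y}" using \<open>a \<in> A\<close> \<open>b \<in> A\<close> A by blast+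
    ultimately show ?thesis using x y by (auto simp: inv_mult_group)
  qed
  show ?thesis
  proof (intro ballI)
    fix p q assume "p \<in> A <#> set_inv A" "q \<in> A <#> set_inv A"
    with Q have "p \<in> {\<one>, x \<otimes> inv y, inv (x \<otimes> inv y)}" "q \<in> {\<one>, x \<otimes> inv y, inv (x \<otimes> inv y)}"
      by blast+
    then show "p \<otimes> q = q \<otimes> p" using x y by auto
  qed
qed

lemma quasi_simple_card_conj_orbit:
  assumes fin: "finite (carrier G)"
    and qs: "quasi_simple G M" and xN: "x \<in> normalizer G M" and xC: "x \<notin> centralizer G M"
  shows "2 < card (conj_orbit G M x)"
proof (rule ccontr)
  let ?O = "conj_orbit G M x"
  let ?Q = "?O <#> set_inv ?O"
  assume "\<not> 2 < card ?O"
  have M: "subgroup M G" using qs by (rule quasi_simple_subgroup)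
  have x: "x \<in> carrier G" using xN normalizer_subset_carrier by blast
  have O: "?O \<subseteq> carrier G" using conj_orbit_subset_carrier[OF subgroup.subset[OF M] x] .
  have "x \<in> ?O" using conj_orbit_self[OF M x] .
  have "finite (?O - {x})" "card (?O - {x}) \<le> Suc 0"
    using finite_subset[OF O fin] \<open>\<not> 2 < card ?O\<close> \<open>x \<in> ?O\<close> by simp_all
  then have "\<forall>a\<in>?O - {x}. \<forall>b\<in>?O - {x}. a = b" by (simp only: card_le_Suc0_iff_eq)
  then obtain x' where "x' \<in> ?O" "?O \<subseteq> {x, x'}"
    using \<open>x \<in> ?O\<close> by (cases "?O - {x} = {}") blast+
  then have Q_comm: "\<forall>p\<in>?Q. \<forall>q\<in>?Q. p \<otimes> q = q \<otimes> p"
    using O by (intro set_mult_set_inv_commute_if_subset_doubleton[OF x]) auto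
  have Q_carr: "?Q \<subseteq> carrier G"
    using O by (intro setmult_subset_G) (auto simp: SET_INV_def)
  have "\<forall>a\<in>M. \<forall>b\<in>M. a \<otimes> b = b \<otimes> a"
  proof (intro ballI)
    fix a b assume "a \<in> M" "b \<in> M"
    then show "a \<otimes> b = b \<otimes> a"
      by (intro generate_commute[OF Q_carr Q_carr Q_comm])
        (simp_all add: quasi_simple_generate_conj_orbit_quotients[OF qs xN xC])
  qed
  then show False using quasi_simple_not_commutative[OF qs] by blast
qed

lemma quasi_simple_conj_orbits_not_commute:
  assumes qs: "quasi_simple G M"
    and x: "x \<in> normalizer G M" "x \<notin> centralizer G M"
    and y: "y \<in> normalizer G M" "y \<notin> centralizer G M"
  shows "\<exists>a\<in>conj_orbit G M x. \<exists>b\<in>conj_orbit G M y. a \<otimes> b \<noteq> b \<otimes> a"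
proof (rule ccontr)
  assume "\<not> ?thesis"
  then have comm: "\<forall>a\<in>conj_orbit G M x. \<forall>b\<in>conj_orbit G M y. a \<otimes> b = b \<otimes> a" by blast
  have "conj_orbit G M x \<subseteq> carrier G" "conj_orbit G M y \<subseteq> carrier G"
    using conj_orbit_subset_carrier subgroup.subset[OF quasi_simple_subgroup[OF qs]]
      normalizer_subset_carrier x(1) y(1) by blast+
  note generate_comm = generate_commute[OF this comm]
  have "\<forall>a\<in>M. \<forall>b\<in>M. a \<otimes> b = b \<otimes> a"
  proof (intro ballI)
    fix a b assume "a \<in> M" "b \<in> M"
    then show "a \<otimes> b = b \<otimes> a"
      using generate_comm quasi_simple_subset_generate_conj_orbit[OF qs] x y by blast
  qed
  then show False using quasi_simple_not_commutative[OF qs] by blast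
qed

end

theorem mainTheorem2:
  fixes G (structure) and M T :: "'a set" and r :: 'a
  assumes "group G" and "finite (carrier G)"
    and "subgroup M G"
    and "subgroup T G" and "T \<subseteq> normalizer G M"
    and "\<forall>x \<in> T. \<forall>y \<in> T. x \<otimes> y = y \<otimes> x"
    and "r \<in> T"
    and q: "quasi_simple G M"
    and n: "r \<notin> centralizer G M"
    and w: "(conj_orbit G (carrier G) r \<inter> T) - ((conj_orbit G M r \<inter> T) \<union> centralizer G M) \<noteq> {}"
  shows "type_C G (conj_orbit G (carrier G) r)"
proof -
  interpret group G by fact
  note M = assms(3) and T = assms(4,5) and T_comm = assms(6)
  from w obtain s where sG: "s \<in> conj_orbit G (carrier G) r" and "s \<in> T"
    and sM: "s \<notin> conj_orbit G M r" and sC: "s \<notin> centralizer G M"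
    by auto
  have rN: "r \<in> normalizer G M" and sN: "s \<in> normalizer G M"
    using \<open>r \<in> T\<close> \<open>s \<in> T\<close> T(2) by auto
  then have r: "r \<in> carrier G" and s: "s \<in> carrier G"
    using normalizer_subset_carrier by blast+
  define H where "H = generate G (\<Union>x\<in>{r, s}. conj_orbit G M x)"
  have H: "subgroup H G"
    unfolding H_def using conj_orbit_subset_carrier[OF subgroup.subset[OF M]] r s
    by (intro generate_is_subgroup) auto
  have "generate G (conj_orbit G M r) \<subseteq> H" unfolding H_def by (rule mono_generate) auto
  then have "M \<subseteq> H" using quasi_simple_subset_generate_conj_orbit[OF q rN n] by (rule order_trans[rotated])
  then have orbits: "conj_orbit G H r = conj_orbit G M r" "conj_orbit G H s = conj_orbit G M s"
    unfolding H_def using \<open>r \<in> T\<close> \<open>s \<in> T\<close>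
    by (intro conj_orbit_generate_conj_orbits[OF M T T_comm]; auto)+
  obtain r' s' where "r' \<in> conj_orbit G M r" "s' \<in> conj_orbit G M s" "r' \<otimes> s' \<noteq> s' \<otimes> r'"
    using quasi_simple_conj_orbits_not_commute[OF q rN n sN sC] by blast
  then show ?thesis
  proof (rule type_C_of_conj_orbits[OF H r s, unfolded orbits])
    show "conj_orbit G M r \<subseteq> conj_orbit G (carrier G) r"
      "conj_orbit G M s \<subseteq> conj_orbit G (carrier G) r"
      using conj_orbit_mono[OF subgroup.subset[OF M]] conj_orbit_eq[OF subgroup_self r sG] by auto
    show "H = generate G (conj_orbit G M r \<union> conj_orbit G M s)" unfolding H_def by simp
    show "conj_orbit G M r \<noteq> conj_orbit G M s" using conj_orbit_self[OF M s] sM by blast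
    show "2 < card (conj_orbit G M r)" "2 < card (conj_orbit G M s)"
      using quasi_simple_card_conj_orbit[OF assms(2) q] rN n sN sC by auto
  qed
qed

end
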